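(* For every positive integer $N$ there exists a SudoQ of size $N^2\times N^2$ of maximal cardinality $N^4$, i.e. all of its $N^4$ entries are pairwise distinct (up to global phase).
   Context: A SudoQ of size $N^2\times N^2$ is an $N^2\times N^2$ array of unit vectors in $\mathbb{C}^{N^2}$ such that the entries of each row, each column, and each of the $N^2$ disjoint $N\times N$ blocks form an orthonormal basis of $\mathbb{C}^{N^2}$. Its cardinality is the number of distinct entries, vectors differing only by a global phase being considered equal. *)

theory Defs
  imports "HOL-Analysis.Analysis"
begin

text \<open>Vectors of C^d are represented as functions nat => complex, supported on {0..<d}.\<close>

definition cvec :: "nat \<Rightarrow> (nat \<Rightarrow> complex) \<Rightarrow> bool" where
  "cvec d v \<longleftrightarrow> (\<forall>k\<ge>d. v k = 0)"

definition cinner :: "nat \<Rightarrow> (nat \<Rightarrow> complex) \<Rightarrow> (nat \<Rightarrow> complex) \<Rightarrow> complex" where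
  "cinner d u v = (\<Sum>k<d. cnj (u k) * v k)"

definition is_onb :: "nat \<Rightarrow> 'i set \<Rightarrow> ('i \<Rightarrow> (nat \<Rightarrow> complex)) \<Rightarrow> bool" where
  "is_onb d I b \<longleftrightarrow>
     (\<forall>i\<in>I. cvec d (b i)) \<and>
     (\<forall>i\<in>I. \<forall>j\<in>I. cinner d (b i) (b j) = (if i = j then 1 else 0)) \<and>
     (\<forall>v. cvec d v \<longrightarrow> (\<exists>c. v = (\<lambda>k. \<Sum>i\<in>I. c i * b i k))) \<and>
     finite I"

definition is_sudoq :: "nat \<Rightarrow> (nat \<Rightarrow> nat \<Rightarrow> (nat \<Rightarrow> complex)) \<Rightarrow> bool" where
  "is_sudoq N S \<longleftrightarrow>
     (\<forall>r<N^2. is_onb (N^2) {..<N^2} (\<lambda>c. S r c)) \<and>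
     (\<forall>c<N^2. is_onb (N^2) {..<N^2} (\<lambda>r. S r c)) \<and>
     (\<forall>a<N. \<forall>b<N. is_onb (N^2) ({a*N..<a*N+N} \<times> {b*N..<b*N+N}) (\<lambda>(r,c). S r c))"

definition phase_eq :: "(nat \<Rightarrow> complex) \<Rightarrow> (nat \<Rightarrow> complex) \<Rightarrow> bool" where
  "phase_eq u v \<longleftrightarrow> (\<exists>z. cmod z = 1 \<and> u = (\<lambda>k. z * v k))"

definition sudoq_card :: "nat \<Rightarrow> (nat \<Rightarrow> nat \<Rightarrow> (nat \<Rightarrow> complex)) \<Rightarrow> nat" where
  "sudoq_card N S = card ({(r, c). r < N^2 \<and> c < N^2} //
      {((r,c),(r',c')). r < N^2 \<and> c < N^2 \<and> r' < N^2 \<and> c' < N^2 \<and> phase_eq (S r c) (S r' c')})"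

end

theory Submission
  imports Defs "HOL-Number_Theory.Cong" "Jordan_Normal_Form.Determinant"
begin

(* Write r = N r1 + r2, c = N c1 + c2 and read C^(N^2) as C^N \<otimes> C^N.  For x < N the vectors
   f(x,i) m = w^(m (i N + x)) / sqrt N, i < N, with w = cis (2 pi / N^2), are the Fourier basis of
   C^N twisted by the diagonal phase w^(m x), hence orthonormal.  The entry in cell (r, c) is
   f(r1, r2 + c1) \<otimes> f(c1, r1 + c2), indices mod N.  Two distinct cells of a common row, column
   or block share the twist of one tensor factor but differ in its frequency, so their entries
   are orthogonal.  Coordinate 0 of every entry is 1/N, which rules out nontrivial phases, and
   coordinates 1 and N, namely w^((r1 + c2) N + c1) / N and w^((r2 + c1) N + r1) / N, determine
   the cell; so all N^4 entries are distinct up to phase. *)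

lemma orthonormal_imp_complete:
  fixes b :: "'i \<Rightarrow> nat \<Rightarrow> complex"
  assumes "finite I" and "card I = d"
    and orth: "\<forall>i\<in>I. \<forall>j\<in>I. cinner d (b i) (b j) = (if i = j then 1 else 0)"
    and "k < d" and "k' < d"
  shows "(\<Sum>i\<in>I. b i k * cnj (b i k')) = (if k = k' then 1 else 0)"
proof -
  obtain e where e: "bij_betw e {..<d} I"
    using ex_bij_betw_nat_finite[OF assms(1)] unfolding assms(2) atLeast0LessThan by blast
  define B :: "complex mat" where "B = mat d d (\<lambda>(k, j). b (e j) k)"
  define H :: "complex mat" where "H = mat d d (\<lambda>(j, k). cnj (b (e j) k))"
  have HB: "H * B = 1\<^sub>m d"
  proof (rule eq_matI)
    fix j j' assume j: "j < dim_row (1\<^sub>m d)" and j': "j' < dim_col (1\<^sub>m d)"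
    have "e j \<in> I" "e j' \<in> I" "e j = e j' \<longleftrightarrow> j = j'"
      using e j j' by (auto simp: bij_betw_def inj_on_def)
    then have "cinner d (b (e j)) (b (e j')) = 1\<^sub>m d $$ (j, j')"
      using orth j j' by simp
    then show "(H * B) $$ (j, j') = 1\<^sub>m d $$ (j, j')"
      using j j' by (simp add: H_def B_def scalar_prod_def cinner_def lessThan_atLeast0)
  qed (auto simp: H_def B_def)
  have "B * H = 1\<^sub>m d"
    by (rule mat_mult_left_right_inverse[OF _ _ HB]) (auto simp: H_def B_def)
  then have "(B * H) $$ (k, k') = 1\<^sub>m d $$ (k, k')"
    by simp
  then have "(\<Sum>j<d. b (e j) k * cnj (b (e j) k')) = (if k = k' then 1 else 0)"
    using assms(4,5) by (simp add: B_def H_def scalar_prod_def lessThan_atLeast0)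
  then show ?thesis
    using sum.reindex_bij_betw[OF e, of "\<lambda>i. b i k * cnj (b i k')"] by simp
qed

lemma is_onb_if_orthonormal:
  fixes b :: "'i \<Rightarrow> nat \<Rightarrow> complex"
  assumes fin: "finite I" and card: "card I = d"
    and vec: "\<forall>i\<in>I. cvec d (b i)"
    and orth: "\<forall>i\<in>I. \<forall>j\<in>I. cinner d (b i) (b j) = (if i = j then 1 else 0)"
  shows "is_onb d I b"
proof -
  have "\<exists>c. v = (\<lambda>k. \<Sum>i\<in>I. c i * b i k)" if v: "cvec d v" for v
  proof (intro exI ext)
    fix k
    show "v k = (\<Sum>i\<in>I. cinner d (b i) v * b i k)"
    proof (cases "k < d")
      case False
      then show ?thesis using v vec by (simp add: cvec_def)
    next
      case True
      have "(\<Sum>i\<in>I. cinner d (b i) v * b i k) = (\<Sum>k'<d. v k' * (\<Sum>i\<in>I. b i k * cnj (b i k')))"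
        unfolding cinner_def sum_distrib_left sum_distrib_right
        by (subst sum.swap) (simp add: mult_ac)
      also have "\<dots> = (\<Sum>k'<d. if k = k' then v k' else 0)"
        using orthonormal_imp_complete[OF fin card orth True] by (intro sum.cong) auto
      also have "\<dots> = v k" using True by simp
      finally show ?thesis by simp
    qed
  qed
  then show ?thesis unfolding is_onb_def using vec orth fin by blast
qed

definition tensor :: "nat \<Rightarrow> (nat \<Rightarrow> complex) \<Rightarrow> (nat \<Rightarrow> complex) \<Rightarrow> nat \<Rightarrow> complex" where
  "tensor n u v k = u (k div n) * v (k mod n)"

lemma sum_lessThan_mult:
  fixes h :: "nat \<Rightarrow> 'a::comm_monoid_add"
  shows "(\<Sum>k<m * n. h k) = (\<Sum>i<m. \<Sum>j<n. h (i * n + j))"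
proof -
  have "(\<Sum>j<n. h (i * n + j)) = sum h {i * n..<i * n + n}" for i
    using sum.shift_bounds_nat_ivl[of h 0 "i * n" n] by (simp add: atLeast0LessThan add.commute)
  then show ?thesis
    using sum.nat_group[of h n m] by simp
qed

lemma cinner_tensor:
  "cinner (m * n) (tensor n u v) (tensor n u' v') = cinner m u u' * cinner n v v'"
proof -
  have "cinner (m * n) (tensor n u v) (tensor n u' v')
      = (\<Sum>i<m. \<Sum>j<n. (cnj (u i) * u' i) * (cnj (v j) * v' j))"
    unfolding cinner_def sum_lessThan_mult
    by (intro sum.cong refl) (simp add: tensor_def mult_ac)
  then show ?thesis
    by (simp add: cinner_def sum_product)
qed

lemma cvec_tensor:
  assumes "cvec m u" and "cvec n v"
  shows "cvec (m * n) (tensor n u v)"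
  unfolding cvec_def
proof (intro allI impI)
  fix k assume "m * n \<le> k"
  show "tensor n u v k = 0"
  proof (cases "n = 0")
    case True
    then show ?thesis using assms(2) by (simp add: tensor_def cvec_def)
  next
    case False
    then have "m \<le> k div n"
      using \<open>m * n \<le> k\<close> by (simp add: less_eq_div_iff_mult_less_eq)
    then show ?thesis using assms(1) by (simp add: tensor_def cvec_def)
  qed
qed

lemma sum_cnj_mult_roots_unity:
  fixes w w' :: complex
  assumes "N > 0" and "w ^ N = 1" and "w' ^ N = 1"
  shows "(\<Sum>m<N. cnj (w ^ m) * w' ^ m) = (if w = w' then of_nat N else 0)"
proof -
  have "norm w = 1"
    using power_eq_1_iff[OF assms(2)] assms(1) by simp
  then have unit: "cnj w * w = 1"
    using complex_norm_square[of w] by (simp add: mult.commute)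
  have sum: "(\<Sum>m<N. cnj (w ^ m) * w' ^ m) = (\<Sum>m<N. (cnj w * w') ^ m)"
    by (simp add: power_mult_distrib)
  show ?thesis
  proof (cases "w = w'")
    case True
    then show ?thesis using sum unit by simp
  next
    case False
    then have "cnj w * w' \<noteq> 1"
      using unit by (metis mult.assoc mult.commute mult_1_right)
    moreover have "cnj w ^ N = 1"
      using assms(2) by (metis complex_cnj_one complex_cnj_power)
    then have "(cnj w * w') ^ N = 1"
      using assms(3) by (simp add: power_mult_distrib)
    ultimately show ?thesis
      using sum False by (simp add: geometric_sum)
  qed
qed

definition twisted_fourier :: "nat \<Rightarrow> nat \<Rightarrow> nat \<Rightarrow> nat \<Rightarrow> complex" where
  "twisted_fourier N x i m =
     (if m < N then (cis (2 * pi * x / N^2) * cis (2 * pi * i / N)) ^ m / sqrt N else 0)"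

lemma cvec_twisted_fourier: "cvec N (twisted_fourier N x i)"
  by (simp add: cvec_def twisted_fourier_def)

lemma cinner_twisted_fourier:
  assumes "i < N" and "i' < N"
  shows "cinner N (twisted_fourier N x i) (twisted_fourier N x i') = (if i = i' then 1 else 0)"
proof -
  have N: "N > 0" using assms by simp
  let ?w = "\<lambda>i. cis (2 * pi * i / N)"
  have "bij_betw ?w {..<N} {z. z ^ N = 1}"
    by (rule Complex.bij_betw_roots_unity[OF N])
  then have root: "?w i ^ N = 1" "?w i' ^ N = 1" and w_eq: "?w i = ?w i' \<longleftrightarrow> i = i'"
    using assms by (auto simp: bij_betw_def dest: inj_onD)
  let ?t = "cis (2 * pi * x / N^2)"
  have twist: "cnj (?t ^ m) * ?t ^ m = 1" for m
    by (simp add: cis_cnj cis_mult flip: power_mult_distrib)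
  have sqrt: "complex_of_real (sqrt N) * complex_of_real (sqrt N) = of_nat N"
    by (simp flip: of_real_mult)
  have "cnj (twisted_fourier N x i m) * twisted_fourier N x i' m = cnj (?w i ^ m) * ?w i' ^ m / N"
    if "m < N" for m
  proof -
    have "cnj (twisted_fourier N x i m) * twisted_fourier N x i' m
        = (cnj (?t ^ m) * ?t ^ m) * (cnj (?w i ^ m) * ?w i' ^ m)
          / (complex_of_real (sqrt N) * complex_of_real (sqrt N))"
      using that by (simp add: twisted_fourier_def power_mult_distrib mult_ac)
    then show ?thesis
      by (simp only: twist sqrt mult_1)
  qed
  then have "cinner N (twisted_fourier N x i) (twisted_fourier N x i')
      = (\<Sum>m<N. cnj (?w i ^ m) * ?w i' ^ m) / N"
    by (simp add: cinner_def sum_divide_distrib)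
  also have "\<dots> = (if i = i' then 1 else 0)"
    using N by (subst sum_cnj_mult_roots_unity[OF N root]) (simp add: w_eq)
  finally show ?thesis .
qed

lemma twisted_fourier_0: "N > 0 \<Longrightarrow> twisted_fourier N x i 0 = 1 / sqrt N"
  by (simp add: twisted_fourier_def)

lemma twisted_fourier_1_inj:
  assumes "1 < N" and "x < N" and "x' < N" and "i < N" and "i' < N"
    and "twisted_fourier N x i 1 = twisted_fourier N x' i' 1"
  shows "x = x' \<and> i = i'"
proof -
  let ?c = "\<lambda>k. cis (2 * pi * real k / real (N^2))"
  have val: "twisted_fourier N x i 1 = ?c (i * N + x) / sqrt N" for x i
    using assms(1) by (simp add: twisted_fourier_def cis_mult power2_eq_square field_simps)
  have lt: "i * N + x < N^2" if "x < N" "i < N" for x i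
  proof -
    have "i * N + x < (i + 1) * N" using that by simp
    also have "\<dots> \<le> N * N" using that by (intro mult_le_mono1) simp
    finally show ?thesis by (simp add: power2_eq_square)
  qed
  have inj: "inj_on ?c {..<N^2}"
    using Complex.bij_betw_roots_unity[of "N^2"] assms(1) by (simp add: bij_betw_imp_inj_on)
  have "?c (i * N + x) = ?c (i' * N + x')"
    using assms(6) assms(1) unfolding val by simp
  then have "i * N + x = i' * N + x'"
    by (rule inj_onD[OF inj]) (simp_all add: lt assms(2-5))
  then have "(i * N + x) div N = (i' * N + x') div N" "(i * N + x) mod N = (i' * N + x') mod N"
    by simp_all
  then show ?thesis
    using assms(1-3) by simp
qed

lemma mod_add_left_cancel_less:
  fixes a b b' N :: nat
  assumes "b < N" and "b' < N"
  shows "(a + b) mod N = (a + b') mod N \<longleftrightarrow> b = b'"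
  using cong_add_lcancel_nat[of a b b' N] assms by (simp add: cong_def)

lemma mod_add_right_cancel_less:
  fixes a b b' N :: nat
  assumes "b < N" and "b' < N"
  shows "(b + a) mod N = (b' + a) mod N \<longleftrightarrow> b = b'"
  using mod_add_left_cancel_less[OF assms, of a] by (simp add: add.commute)

lemma nat_eq_iff_div_mod_eq:
  fixes r r' N :: nat
  shows "r = r' \<longleftrightarrow> r div N = r' div N \<and> r mod N = r' mod N"
  by (metis div_mult_mod_eq)

lemma div_less_if_less_square:
  fixes y N :: nat
  shows "y < N^2 \<Longrightarrow> y div N < N"
  by (simp add: less_mult_imp_div_less power2_eq_square)

definition fourier_sudoq :: "nat \<Rightarrow> nat \<Rightarrow> nat \<Rightarrow> nat \<Rightarrow> complex" where
  "fourier_sudoq N r c =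
     tensor N (twisted_fourier N (r div N) ((r mod N + c div N) mod N))
              (twisted_fourier N (c div N) ((r div N + c mod N) mod N))"

lemma cvec_fourier_sudoq: "cvec (N^2) (fourier_sudoq N r c)"
  unfolding fourier_sudoq_def power2_eq_square by (intro cvec_tensor cvec_twisted_fourier)

lemma same_region_separated:
  fixes N r c r' c' :: nat
  assumes "r < N^2" and "r' < N^2" and "c < N^2" and "c' < N^2" and "(r, c) \<noteq> (r', c')"
    and "r = r' \<or> c = c' \<or> (r div N = r' div N \<and> c div N = c' div N)"
  shows "r div N = r' div N \<and> (r mod N + c div N) mod N \<noteq> (r' mod N + c' div N) mod N
    \<or> c div N = c' div N \<and> (r div N + c mod N) mod N \<noteq> (r' div N + c' mod N) mod N"
proof -
  have "N > 0" using assms(1) by (cases N) auto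
  then have less: "x mod N < N" "y < N^2 \<Longrightarrow> y div N < N" for x y
    by (simp_all add: div_less_if_less_square)
  show ?thesis
    using assms(6)
  proof (elim disjE conjE)
    assume "r = r'"
    then show ?thesis
      using assms(3-5) less nat_eq_iff_div_mod_eq[of c c' N]
      by (auto simp: mod_add_left_cancel_less)
  next
    assume "c = c'"
    then show ?thesis
      using assms(1,2,5) less nat_eq_iff_div_mod_eq[of r r' N]
      by (auto simp: mod_add_right_cancel_less)
  next
    assume "r div N = r' div N" and "c div N = c' div N"
    then show ?thesis
      using assms(5) less nat_eq_iff_div_mod_eq[of r r' N] nat_eq_iff_div_mod_eq[of c c' N]
      by (auto simp: mod_add_left_cancel_less mod_add_right_cancel_less)
  qed
qed

lemma cinner_fourier_sudoq:
  assumes "r < N^2" and "r' < N^2" and "c < N^2" and "c' < N^2"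
    and "r = r' \<or> c = c' \<or> (r div N = r' div N \<and> c div N = c' div N)"
  shows "cinner (N^2) (fourier_sudoq N r c) (fourier_sudoq N r' c')
    = (if (r, c) = (r', c') then 1 else 0)"
proof -
  have "N > 0" using assms(1) by (cases N) auto
  have "cinner (N^2) (fourier_sudoq N r c) (fourier_sudoq N r' c')
      = cinner N (twisted_fourier N (r div N) ((r mod N + c div N) mod N))
                 (twisted_fourier N (r' div N) ((r' mod N + c' div N) mod N))
      * cinner N (twisted_fourier N (c div N) ((r div N + c mod N) mod N))
                 (twisted_fourier N (c' div N) ((r' div N + c' mod N) mod N))"
    by (simp add: fourier_sudoq_def power2_eq_square cinner_tensor)
  then show ?thesis
    using same_region_separated[OF assms(1-4) _ assms(5)] \<open>N > 0\<close>
    by (auto simp: cinner_twisted_fourier)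
qed

lemma block_bounds:
  fixes a N r :: nat
  assumes "a < N" and "r \<in> {a * N..<a * N + N}"
  shows "r div N = a" and "r < N^2"
proof -
  show "r div N = a"
    using assms(2) by (auto intro: div_nat_eqI simp: mult.commute)
  have "a * N + N \<le> N * N"
    using assms(1) mult_le_mono1[of "Suc a" N N] by simp
  then show "r < N^2"
    using assms(2) by (simp add: power2_eq_square)
qed

lemma is_sudoq_fourier_sudoq: "is_sudoq N (fourier_sudoq N)"
  unfolding is_sudoq_def
proof (intro conjI allI impI)
  fix r assume "r < N^2"
  then show "is_onb (N^2) {..<N^2} (\<lambda>c. fourier_sudoq N r c)"
    by (intro is_onb_if_orthonormal) (auto simp: cvec_fourier_sudoq cinner_fourier_sudoq)
next
  fix c assume "c < N^2"
  then show "is_onb (N^2) {..<N^2} (\<lambda>r. fourier_sudoq N r c)"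
    by (intro is_onb_if_orthonormal) (auto simp: cvec_fourier_sudoq cinner_fourier_sudoq)
next
  fix a b assume "a < N" "b < N"
  let ?I = "{a * N..<a * N + N} \<times> {b * N..<b * N + N}"
  have "card ?I = N^2"
    by (simp add: card_cartesian_product power2_eq_square)
  moreover have "\<forall>p\<in>?I. \<forall>q\<in>?I. cinner (N^2) ((\<lambda>(r, c). fourier_sudoq N r c) p)
      ((\<lambda>(r, c). fourier_sudoq N r c) q) = (if p = q then 1 else 0)"
    using block_bounds[OF \<open>a < N\<close>] block_bounds[OF \<open>b < N\<close>]
    by (auto simp: cinner_fourier_sudoq)
  ultimately show "is_onb (N^2) ?I (\<lambda>(r, c). fourier_sudoq N r c)"
    by (intro is_onb_if_orthonormal) (auto simp: cvec_fourier_sudoq)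
qed

lemma fourier_sudoq_eq_imp_eq:
  assumes "1 < N" and "r < N^2" and "r' < N^2" and "c < N^2" and "c' < N^2"
    and "fourier_sudoq N r c = fourier_sudoq N r' c'"
  shows "(r, c) = (r', c')"
proof -
  have less: "x mod N < N" "y < N^2 \<Longrightarrow> y div N < N" for x y
    using assms(1) by (simp_all add: div_less_if_less_square)
  have entry_1: "fourier_sudoq N x y 1
      = twisted_fourier N (y div N) ((x div N + y mod N) mod N) 1 / sqrt N"
    and entry_N: "fourier_sudoq N x y N
      = twisted_fourier N (x div N) ((x mod N + y div N) mod N) 1 / sqrt N"
    for x y
    using assms(1) by (simp_all add: fourier_sudoq_def tensor_def twisted_fourier_0)
  have "twisted_fourier N (c div N) ((r div N + c mod N) mod N) 1
      = twisted_fourier N (c' div N) ((r' div N + c' mod N) mod N) 1"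
    using arg_cong[OF assms(6), of "\<lambda>v. v 1"] assms(1) unfolding entry_1 by simp
  moreover have "twisted_fourier N (r div N) ((r mod N + c div N) mod N) 1
      = twisted_fourier N (r' div N) ((r' mod N + c' div N) mod N) 1"
    using arg_cong[OF assms(6), of "\<lambda>v. v N"] assms(1) unfolding entry_N by simp
  ultimately have "c div N = c' div N" "(r div N + c mod N) mod N = (r' div N + c' mod N) mod N"
      and "r div N = r' div N" "(r mod N + c div N) mod N = (r' mod N + c' div N) mod N"
    using twisted_fourier_1_inj[OF assms(1)] less assms(2-5) by blast+
  then show ?thesis
    using less nat_eq_iff_div_mod_eq[of r r' N] nat_eq_iff_div_mod_eq[of c c' N]
    by (simp add: mod_add_left_cancel_less mod_add_right_cancel_less)
qed

lemma fourier_sudoq_phase_distinct: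
  assumes "N \<ge> 1" and "r < N^2" and "r' < N^2" and "c < N^2" and "c' < N^2"
    and "phase_eq (fourier_sudoq N r c) (fourier_sudoq N r' c')"
  shows "(r, c) = (r', c')"
proof (cases "N = 1")
  case True
  then show ?thesis using assms(2-5) by simp
next
  case False
  then have "1 < N" using assms(1) by simp
  obtain z where z: "fourier_sudoq N r c = (\<lambda>k. z * fourier_sudoq N r' c' k)"
    using assms(6) unfolding phase_eq_def by blast
  have "fourier_sudoq N x y 0 = 1 / N" for x y
    using \<open>1 < N\<close> by (simp add: fourier_sudoq_def tensor_def twisted_fourier_0 flip: of_real_mult)
  then have "z = 1"
    using fun_cong[OF z, of 0] \<open>1 < N\<close> by simp
  then show ?thesis
    using fourier_sudoq_eq_imp_eq[OF \<open>1 < N\<close> assms(2-5)] z by simp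
qed

lemma sudoq_card_eq_if_phase_distinct:
  assumes "\<And>r c r' c'. r < N^2 \<Longrightarrow> c < N^2 \<Longrightarrow> r' < N^2 \<Longrightarrow> c' < N^2 \<Longrightarrow>
      phase_eq (S r c) (S r' c') \<Longrightarrow> (r, c) = (r', c')"
  shows "sudoq_card N S = N^4"
proof -
  let ?A = "{(r, c). r < N^2 \<and> c < N^2}"
  let ?R = "{((r, c), (r', c')). r < N^2 \<and> c < N^2 \<and> r' < N^2 \<and> c' < N^2 \<and>
    phase_eq (S r c) (S r' c')}"
  have "phase_eq v v" for v
    unfolding phase_eq_def by (intro exI[of _ 1]) simp
  moreover have "(r', c') = (r, c)" if "(r, c) \<in> ?A" and "((r, c), (r', c')) \<in> ?R" for r c r' c'
    using that assms[of r c r' c'] by auto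
  ultimately have "?R `` {p} = {p}" if "p \<in> ?A" for p
    using that by auto
  then have "?A // ?R = (\<lambda>p. {p}) ` ?A"
    unfolding quotient_def by auto
  moreover have "?A = {..<N^2} \<times> {..<N^2}"
    by auto
  ultimately have "card (?A // ?R) = card ({..<N^2} \<times> {..<N^2})"
    by (simp add: card_image)
  then show ?thesis
    unfolding sudoq_card_def by (simp add: card_cartesian_product flip: power_add)
qed

theorem mainTheorem19:
  fixes N :: nat
  assumes "N \<ge> 1"
  shows "\<exists>S. is_sudoq N S \<and> sudoq_card N S = N^4"
proof (intro exI conjI)
  show "is_sudoq N (fourier_sudoq N)"
    by (rule is_sudoq_fourier_sudoq)
  show "sudoq_card N (fourier_sudoq N) = N^4"
    using fourier_sudoq_phase_distinct[OF assms] by (intro sudoq_card_eq_if_phase_distinct)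
qed

end
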